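(* For every $u\in V$, $\Pr(E_u)=\mathcal{O}\left(\log^{-1} n\right)$ as $n\to\infty$, with the implied constant independent of $u$; here $E_u$ is the event that there exists a C3 rooted at $u$ whose type is one of the seven words in $\{s,w\}^3\setminus\{(s,s,s)\}$ (i.e., containing at least one $w$).
   Context: For an integer $n\ge1$, the $n$-octahedral graph $G'_n=(V,E')$ is the undirected graph with vertex set $V=\{u\in\mathbb{Z}^3:|u_1|+|u_2|+|u_3|=n\}$ and edge set $E'=\{\{v,w\}\subset V: v\neq w,\ |v_i-w_i|\le 1 \text{ for all } i=1,2,3\}$. For $u,v\in V$, $d_{uv}$ denotes the shortest-path distance in $G'_n$, and $Z_u=\left(\sum_{w\in V\setminus\{u\}} d_{uw}^{-2}\right)^{-1}$. The OSW random graph $G_n=(V,E)$ is the directed graph in which, for every $\{u,v\}\in E'$, both $(u,v),(v,u)\in E$, and in addition each vertex $u\in V$, independently of the others, chooses one vertex $v\in V\setminus\{u\}$ with probability $Z_u d_{uv}^{-2}$ and the long-range edge $(u,v)$ is added; $C_{uv}$ denotes the event that $u$ chooses $v$. For an ordered pair $(x,y)$ of distinct vertices, say $(x,y)$ is of type $s$ if $\{x,y\}\in E'$, and of type $w$ if $d_{xy}\ge2$ and $C_{xy}$ occurs. A C3 rooted at $u$ of type $(t_1,t_2,t_3)\in\{s,w\}^3$ is a triple $(u,a,b)$ of pairwise distinct vertices such that $(u,a)$ is of type $t_1$, $(a,b)$ is of type $t_2$ and $(b,u)$ is of type $t_3$. *)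

theory Defs
  imports "HOL-Probability.Probability"
begin

type_synonym vtx = "int \<times> int \<times> int"

definition Vn :: "nat \<Rightarrow> vtx set" where
  "Vn n = {(x, y, z). \<bar>x\<bar> + \<bar>y\<bar> + \<bar>z\<bar> = int n}"

definition adj :: "nat \<Rightarrow> vtx \<Rightarrow> vtx \<Rightarrow> bool" where
  "adj n v w \<longleftrightarrow> v \<in> Vn n \<and> w \<in> Vn n \<and> v \<noteq> w \<and>
     \<bar>fst v - fst w\<bar> \<le> 1 \<and> \<bar>fst (snd v) - fst (snd w)\<bar> \<le> 1 \<and>
     \<bar>snd (snd v) - snd (snd w)\<bar> \<le> 1"

definition gdist :: "nat \<Rightarrow> vtx \<Rightarrow> vtx \<Rightarrow> nat" where
  "gdist n u v = (LEAST k. \<exists>xs. length xs = Suc k \<and> hd xs = u \<and> last xs = v \<and>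
      set xs \<subseteq> Vn n \<and> (\<forall>i<k. adj n (xs ! i) (xs ! Suc i)))"

definition Zc :: "nat \<Rightarrow> vtx \<Rightarrow> real" where
  "Zc n u = inverse (\<Sum>w\<in>Vn n - {u}. 1 / (real (gdist n u w))\<^sup>2)"

definition choice_pmf :: "nat \<Rightarrow> vtx \<Rightarrow> vtx pmf" where
  "choice_pmf n u = embed_pmf (\<lambda>v. if v \<in> Vn n \<and> v \<noteq> u
       then Zc n u / (real (gdist n u v))\<^sup>2 else 0)"

text \<open>The independent choices of all vertices: a random function c, where c u is
  the vertex chosen by u (C_uv is the event c u = v).\<close>
definition OSW :: "nat \<Rightarrow> (vtx \<Rightarrow> vtx) pmf" where
  "OSW n = Pi_pmf (Vn n) (0, 0, 0) (choice_pmf n)"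

datatype etype = S | W

definition of_type :: "nat \<Rightarrow> (vtx \<Rightarrow> vtx) \<Rightarrow> vtx \<Rightarrow> vtx \<Rightarrow> etype \<Rightarrow> bool" where
  "of_type n c x y t = (case t of
      S \<Rightarrow> adj n x y
    | W \<Rightarrow> x \<in> Vn n \<and> y \<in> Vn n \<and> x \<noteq> y \<and> gdist n x y \<ge> 2 \<and> c x = y)"

definition E_ev :: "nat \<Rightarrow> vtx \<Rightarrow> (vtx \<Rightarrow> vtx) set" where
  "E_ev n u = {c. \<exists>a b t1 t2 t3. a \<in> Vn n \<and> b \<in> Vn n \<and>
      u \<noteq> a \<and> u \<noteq> b \<and> a \<noteq> b \<and> W \<in> {t1, t2, t3} \<and>
      of_type n c u a t1 \<and> of_type n c a b t2 \<and> of_type n c b u t3}"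

end

theory Submission
  imports Defs "HOL-Analysis.Harmonic_Numbers"
begin

text \<open>
  A long-range edge chosen by a vertex x has probability at most Z_x, and Z_x \<le> 1 / ln (n/3 + 1):
  some coordinate of x has modulus at least n/3, and moving mass from it outward into the two
  other coordinates yields k + 1 distinct vertices within distance k of x for every k \<le> n/3,
  so \<Sum>_w d_xw^-2 dominates a harmonic sum. Since the choices are independent, a C3 of a fixed
  type has probability at most the sum over (a, b) of the product of its three edge
  probabilities. Bounding the factor of one long-range edge by 1 / ln (n/3 + 1) and summing the
  other two factors along the cycle (a vertex has at most 27 neighbours in the cube around it,
  and a choice distribution has total mass 1) gives 729 / ln (n/3 + 1) for each of the at most
  eight types.
\<close>

section \<open>The octahedral graph\<close>

lemma finite_Vn: "finite (Vn n)"
proof (rule finite_subset)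
  show "Vn n \<subseteq> {-int n..int n} \<times> {-int n..int n} \<times> {-int n..int n}"
    by (auto simp: Vn_def)
qed auto

lemma adj_commute: "adj n x y \<longleftrightarrow> adj n y x"
  by (auto simp: adj_def abs_minus_commute)

lemma card_adj_le: "card {y \<in> Vn n. adj n x y} \<le> 27"
proof -
  obtain x1 x2 x3 where x: "x = (x1, x2, x3)" by (cases x)
  define box where "box = {-1..1::int} \<times> {-1..1::int} \<times> {-1..1::int}"
  have "{y \<in> Vn n. adj n x y} \<subseteq> (\<lambda>(i, j, k). (x1 + i, x2 + j, x3 + k)) ` box"
  proof
    fix y assume "y \<in> {y \<in> Vn n. adj n x y}"
    moreover obtain y1 y2 y3 where y: "y = (y1, y2, y3)" by (cases y)
    ultimately have "(y1 - x1, y2 - x2, y3 - x3) \<in> box"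
      by (auto simp: adj_def x box_def abs_le_iff)
    then show "y \<in> (\<lambda>(i, j, k). (x1 + i, x2 + j, x3 + k)) ` box"
      by (force simp: y)
  qed
  moreover have "finite box" by (simp add: box_def)
  ultimately have "card {y \<in> Vn n. adj n x y} \<le> card box"
    by (meson card_image_le card_mono finite_imageI order_trans)
  also have "card box = 27" by (simp add: box_def card_cartesian_product)
  finally show ?thesis .
qed

lemma gdist_path:
  fixes f :: "nat \<Rightarrow> vtx"
  assumes "\<And>t. t \<le> k \<Longrightarrow> f t \<in> Vn n" and "\<And>t. t < k \<Longrightarrow> adj n (f t) (f (Suc t))"
  shows gdist_le_path: "gdist n (f 0) (f k) \<le> k"
    and gdist_pos_path: "f 0 \<noteq> f k \<Longrightarrow> 0 < gdist n (f 0) (f k)"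
proof -
  let ?P = "\<lambda>m. \<exists>xs. length xs = Suc m \<and> hd xs = f 0 \<and> last xs = f k \<and>
      set xs \<subseteq> Vn n \<and> (\<forall>i<m. adj n (xs ! i) (xs ! Suc i))"
  have P: "?P k"
    using assms by (intro exI[of _ "map f [0..<Suc k]"])
      (auto simp: hd_map last_map nth_append simp del: upt_Suc)
  then show "gdist n (f 0) (f k) \<le> k"
    unfolding gdist_def by (rule Least_le)
  assume "f 0 \<noteq> f k"
  then have "\<not> ?P 0"
    by (auto simp: length_Suc_conv)
  moreover have "?P (Least ?P)"
    using P by (rule LeastI)
  ultimately have "Least ?P \<noteq> 0"
    by metis
  then show "0 < gdist n (f 0) (f k)"
    unfolding gdist_def by simp
qed

section \<open>A lower bound on the normalising sum\<close>

text \<open>Unlike sgn, never 0, so that mass can be moved outward from a zero coordinate.\<close>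
definition outward :: "int \<Rightarrow> int" where
  "outward v = (if 0 \<le> v then 1 else -1)"

lemma abs_outward [simp]: "\<bar>outward v\<bar> = 1"
  by (simp add: outward_def)

lemma abs_add_outward: "0 \<le> i \<Longrightarrow> \<bar>v + outward v * i\<bar> = \<bar>v\<bar> + i"
  by (simp add: outward_def)

lemma abs_diff_outward: "0 \<le> i \<Longrightarrow> i \<le> \<bar>v\<bar> \<Longrightarrow> \<bar>v - outward v * i\<bar> = \<bar>v\<bar> - i"
  by (simp add: outward_def)

fun shift_mass :: "vtx \<Rightarrow> nat \<Rightarrow> nat \<Rightarrow> vtx" where
  "shift_mass (X, Y, Z) i j =
     (X - outward X * int (i + j), Y + outward Y * int i, Z + outward Z * int j)"

lemma shift_mass_in_Vn:
  "(X, Y, Z) \<in> Vn n \<Longrightarrow> i + j \<le> nat \<bar>X\<bar> \<Longrightarrow> shift_mass (X, Y, Z) i j \<in> Vn n"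
  by (simp add: Vn_def abs_add_outward abs_diff_outward)

lemma shift_mass_eq_iff: "shift_mass p i j = shift_mass p i' j' \<longleftrightarrow> i = i' \<and> j = j'"
  by (cases p) (auto simp: outward_def)

lemma shift_mass_0_0 [simp]: "shift_mass p 0 0 = p"
  by (cases p) simp

lemma adj_shift_mass:
  assumes "(X, Y, Z) \<in> Vn n" "i' + j' \<le> nat \<bar>X\<bar>" "(i', j') = (Suc i, j) \<or> (i', j') = (i, Suc j)"
  shows "adj n (shift_mass (X, Y, Z) i j) (shift_mass (X, Y, Z) i' j')"
  using assms shift_mass_in_Vn[OF assms(1), of i j] shift_mass_in_Vn[OF assms(1-2)]
    shift_mass_eq_iff[of "(X, Y, Z)" i j i' j']
  by (auto simp: adj_def algebra_simps)

declare shift_mass.simps [simp del]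

text \<open>Coordinate permutations are such embeddings; they reduce the lower bound to the case where
  the first coordinate has the largest modulus.\<close>
definition adj_embedding :: "nat \<Rightarrow> (vtx \<Rightarrow> vtx) \<Rightarrow> bool" where
  "adj_embedding n \<sigma> \<longleftrightarrow> inj \<sigma> \<and> (\<forall>p. \<sigma> p \<in> Vn n \<longleftrightarrow> p \<in> Vn n) \<and>
     (\<forall>p p'. adj n p p' \<longrightarrow> adj n (\<sigma> p) (\<sigma> p'))"

lemma adj_embeddingD:
  assumes "adj_embedding n \<sigma>"
  shows "inj \<sigma>" and "\<sigma> p \<in> Vn n \<longleftrightarrow> p \<in> Vn n" and "adj n p p' \<Longrightarrow> adj n (\<sigma> p) (\<sigma> p')"
  using assms unfolding adj_embedding_def by blast+

lemma gdist_shift_mass: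
  assumes \<sigma>: "adj_embedding n \<sigma>" and u: "(X, Y, Z) \<in> Vn n"
    and k: "1 \<le> k" "k \<le> nat \<bar>X\<bar>" "a \<le> k"
  defines "v \<equiv> \<sigma> (shift_mass (X, Y, Z) a (k - a))"
  shows "v \<noteq> \<sigma> (X, Y, Z)" and "1 \<le> gdist n (\<sigma> (X, Y, Z)) v" and "gdist n (\<sigma> (X, Y, Z)) v \<le> k"
proof -
  \<comment> \<open>a path of length k: first a unit steps into the second coordinate, then into the third\<close>
  define f where "f t = \<sigma> (shift_mass (X, Y, Z) (min t a) (t - a))" for t
  have f0: "f 0 = \<sigma> (X, Y, Z)" and fk: "f k = v"
    using k by (simp_all add: f_def v_def)
  have f_Vn: "f t \<in> Vn n" if "t \<le> k" for t
    unfolding f_def adj_embeddingD(2)[OF \<sigma>] using that k by (intro shift_mass_in_Vn[OF u]) simp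
  have f_adj: "adj n (f t) (f (Suc t))" if "t < k" for t
    using that k unfolding f_def
    by (intro adj_embeddingD(3)[OF \<sigma>] adj_shift_mass[OF u]) (auto simp: min_def)
  show "v \<noteq> \<sigma> (X, Y, Z)"
    using k shift_mass_eq_iff[of "(X, Y, Z)" a "k - a" 0 0]
    by (auto simp: v_def inj_eq[OF adj_embeddingD(1)[OF \<sigma>]])
  with gdist_pos_path[where f = f and k = k, OF f_Vn f_adj]
  show "1 \<le> gdist n (\<sigma> (X, Y, Z)) v"
    unfolding f0 fk by simp
  show "gdist n (\<sigma> (X, Y, Z)) v \<le> k"
    using gdist_le_path[where f = f and k = k, OF f_Vn f_adj] unfolding f0 fk .
qed

definition dist_sum :: "nat \<Rightarrow> vtx \<Rightarrow> real" where
  "dist_sum n u = (\<Sum>w\<in>Vn n - {u}. 1 / (real (gdist n u w))\<^sup>2)"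

lemma Zc_eq_inverse_dist_sum: "Zc n u = 1 / dist_sum n u"
  by (simp add: Zc_def dist_sum_def inverse_eq_divide)

lemma ln_add_one_le_sum_Sigma:
  "ln (real P + 1) \<le> (\<Sum>(k, a)\<in>Sigma {1..P} (\<lambda>k. {0..k}). 1 / (real k)\<^sup>2)"
proof -
  have "ln (real P + 1) \<le> (\<Sum>k=1..P. 1 / real k)"
    using ln_le_harm[of P] by (simp add: harm_def inverse_eq_divide)
  also have "\<dots> \<le> (\<Sum>k=1..P. \<Sum>a=0..k. 1 / (real k)\<^sup>2)"
    by (intro sum_mono) (simp add: power2_eq_square field_simps)
  also have "\<dots> = (\<Sum>(k, a)\<in>Sigma {1..P} (\<lambda>k. {0..k}). 1 / (real k)\<^sup>2)"
    by (rule sum.Sigma) auto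
  finally show ?thesis .
qed

lemma ln_le_dist_sum_coord:
  assumes \<sigma>: "adj_embedding n \<sigma>" and u: "(X, Y, Z) \<in> Vn n"
  shows "ln (real (nat \<bar>X\<bar>) + 1) \<le> dist_sum n (\<sigma> (X, Y, Z))"
proof -
  define I where "I = Sigma {1..nat \<bar>X\<bar>} (\<lambda>k. {0..k})"
  define w where "w = (\<lambda>(k, a). \<sigma> (shift_mass (X, Y, Z) a (k - a)))"
  note w_gdist = gdist_shift_mass[OF \<sigma> u]
  have "inj_on w I"
    by (auto simp: inj_on_def w_def I_def inj_eq[OF adj_embeddingD(1)[OF \<sigma>]] shift_mass_eq_iff)
  have w_I: "w i \<in> Vn n - {\<sigma> (X, Y, Z)}" if i: "i \<in> I" for i
  proof -
    obtain k a where "i = (k, a)" "1 \<le> k" "k \<le> nat \<bar>X\<bar>" "a \<le> k"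
      using i by (auto simp: I_def)
    then show ?thesis
      using w_gdist(1)[of k a] by (simp add: w_def adj_embeddingD(2)[OF \<sigma>] shift_mass_in_Vn[OF u])
  qed
  have "ln (real (nat \<bar>X\<bar>) + 1) \<le> (\<Sum>(k, a)\<in>I. 1 / (real k)\<^sup>2)"
    unfolding I_def by (rule ln_add_one_le_sum_Sigma)
  also have "\<dots> \<le> (\<Sum>i\<in>I. 1 / (real (gdist n (\<sigma> (X, Y, Z)) (w i)))\<^sup>2)"
  proof (rule sum_mono)
    fix i assume "i \<in> I"
    then obtain k a where i: "i = (k, a)" "1 \<le> k" "k \<le> nat \<bar>X\<bar>" "a \<le> k"
      by (auto simp: I_def)
    then have "1 \<le> gdist n (\<sigma> (X, Y, Z)) (w i)" "gdist n (\<sigma> (X, Y, Z)) (w i) \<le> k"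
      using w_gdist(2,3)[of k a] by (simp_all add: w_def)
    then show "(case i of (k, a) \<Rightarrow> 1 / (real k)\<^sup>2) \<le> 1 / (real (gdist n (\<sigma> (X, Y, Z)) (w i)))\<^sup>2"
      by (simp add: i divide_left_mono power_mono)
  qed
  also have "\<dots> = (\<Sum>v\<in>w ` I. 1 / (real (gdist n (\<sigma> (X, Y, Z)) v))\<^sup>2)"
    using \<open>inj_on w I\<close> by (simp add: sum.reindex)
  also have "\<dots> \<le> dist_sum n (\<sigma> (X, Y, Z))"
    unfolding dist_sum_def
  proof (rule sum_mono2)
    show "w ` I \<subseteq> Vn n - {\<sigma> (X, Y, Z)}"
      using w_I by (rule image_subsetI)
  qed (simp_all add: finite_Vn)
  finally show ?thesis .
qed

lemma ln_le_dist_sum: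
  assumes "u \<in> Vn n"
  shows "ln (real n / 3 + 1) \<le> dist_sum n u"
proof -
  obtain x y z where u: "u = (x, y, z)" by (cases u)
  have sum: "\<bar>x\<bar> + \<bar>y\<bar> + \<bar>z\<bar> = int n"
    using assms by (simp add: u Vn_def)
  have mono: "ln (real n / 3 + 1) \<le> ln (real (nat m) + 1)" if "int n \<le> 3 * m" for m
    using that by (intro ln_mono) linarith+
  consider "\<bar>y\<bar> \<le> \<bar>x\<bar>" "\<bar>z\<bar> \<le> \<bar>x\<bar>" | "\<bar>x\<bar> \<le> \<bar>y\<bar>" "\<bar>z\<bar> \<le> \<bar>y\<bar>" | "\<bar>x\<bar> \<le> \<bar>z\<bar>" "\<bar>y\<bar> \<le> \<bar>z\<bar>"
    by linarith
  then show ?thesis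
  proof cases
    case 1
    have "ln (real (nat \<bar>x\<bar>) + 1) \<le> dist_sum n u"
      using ln_le_dist_sum_coord[of n id x y z] assms by (simp add: u adj_embedding_def)
    with mono[of "\<bar>x\<bar>"] 1 sum show ?thesis by linarith
  next
    case 2
    have "ln (real (nat \<bar>y\<bar>) + 1) \<le> dist_sum n ((\<lambda>(p, q, r). (q, p, r)) (y, x, z))"
      using sum by (intro ln_le_dist_sum_coord)
        (auto simp: adj_embedding_def inj_def Vn_def adj_def add_ac split: prod.splits)
    then have "ln (real (nat \<bar>y\<bar>) + 1) \<le> dist_sum n u"
      by (simp add: u)
    with mono[of "\<bar>y\<bar>"] 2 sum show ?thesis by linarith
  next
    case 3
    have "ln (real (nat \<bar>z\<bar>) + 1) \<le> dist_sum n ((\<lambda>(p, q, r). (r, q, p)) (z, y, x))"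
      using sum by (intro ln_le_dist_sum_coord)
        (auto simp: adj_embedding_def inj_def Vn_def adj_def add_ac split: prod.splits)
    then have "ln (real (nat \<bar>z\<bar>) + 1) \<le> dist_sum n u"
      by (simp add: u)
    with mono[of "\<bar>z\<bar>"] 3 sum show ?thesis by linarith
  qed
qed

definition Zc_bound :: "nat \<Rightarrow> real" where
  "Zc_bound n = 1 / ln (real n / 3 + 1)"

lemma Zc_bound_nonneg: "0 \<le> Zc_bound n"
  by (simp add: Zc_bound_def)

lemma Zc_bound_le:
  assumes "9 \<le> n"
  shows "Zc_bound n \<le> 2 / ln (real n)"
proof -
  have "ln (real n) = ln 3 + ln (real n / 3)"
    using assms by (simp add: ln_div)
  also have "\<dots> \<le> 2 * ln (real n / 3)"
    using assms by (simp add: ln_mono)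
  also have "\<dots> \<le> 2 * ln (real n / 3 + 1)"
    using assms by simp
  finally have "ln (real n) / 2 \<le> ln (real n / 3 + 1)"
    by simp
  moreover have "0 < ln (real n)"
    using assms by simp
  ultimately show ?thesis
    unfolding Zc_bound_def by (simp add: divide_simps)
qed

lemma ln_third_pos: "1 \<le> n \<Longrightarrow> 0 < ln (real n / 3 + 1)"
  by (intro ln_gt_zero) auto

lemma dist_sum_pos: "1 \<le> n \<Longrightarrow> u \<in> Vn n \<Longrightarrow> 0 < dist_sum n u"
  using ln_le_dist_sum[of u n] ln_third_pos[of n] by linarith

lemma Zc_le_Zc_bound: "1 \<le> n \<Longrightarrow> u \<in> Vn n \<Longrightarrow> Zc n u \<le> Zc_bound n"
  using ln_le_dist_sum[of u n] ln_third_pos[of n]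
  by (simp add: Zc_eq_inverse_dist_sum Zc_bound_def frac_le)

lemma pmf_choice_pmf:
  assumes "1 \<le> n" "u \<in> Vn n"
  shows "pmf (choice_pmf n u) v = (if v \<in> Vn n \<and> v \<noteq> u then Zc n u / (real (gdist n u v))\<^sup>2 else 0)"
  unfolding choice_pmf_def
proof (rule pmf_embed_pmf)
  have pos: "0 < dist_sum n u"
    using dist_sum_pos[OF assms] .
  then show "0 \<le> (if v \<in> Vn n \<and> v \<noteq> u then Zc n u / (real (gdist n u v))\<^sup>2 else 0)" for v
    by (simp add: Zc_eq_inverse_dist_sum)
  have "(\<integral>\<^sup>+ v. ennreal (if v \<in> Vn n \<and> v \<noteq> u then Zc n u / (real (gdist n u v))\<^sup>2 else 0)
        \<partial>count_space UNIV) = (\<Sum>v\<in>Vn n - {u}. ennreal (Zc n u / (real (gdist n u v))\<^sup>2))"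
    by (subst nn_integral_count_space'[where A = "Vn n - {u}"]) (auto simp: finite_Vn intro!: sum.cong)
  also have "\<dots> = ennreal (Zc n u * dist_sum n u)"
    using pos by (subst sum_ennreal) (auto simp: dist_sum_def sum_distrib_left Zc_eq_inverse_dist_sum)
  also have "\<dots> = 1"
    using pos by (simp add: Zc_eq_inverse_dist_sum)
  finally show "(\<integral>\<^sup>+ v. ennreal (if v \<in> Vn n \<and> v \<noteq> u then Zc n u / (real (gdist n u v))\<^sup>2 else 0)
        \<partial>count_space UNIV) = 1" .
qed

lemma pmf_choice_pmf_le:
  assumes "1 \<le> n" "u \<in> Vn n"
  shows "pmf (choice_pmf n u) v \<le> Zc_bound n"
proof -
  have Z: "0 \<le> Zc n u" "Zc n u \<le> Zc_bound n"
    using dist_sum_pos[OF assms] Zc_le_Zc_bound[OF assms] by (simp_all add: Zc_eq_inverse_dist_sum)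
  have "Zc n u / (real (gdist n u v))\<^sup>2 \<le> Zc n u"
    using Z by (cases "gdist n u v") (auto simp: divide_le_eq mult_le_cancel_left1 one_le_power)
  with Z show ?thesis
    by (simp add: pmf_choice_pmf[OF assms])
qed

section \<open>Probabilities of single edges\<close>

text \<open>Whether (x, y) has type t depends on the choices only through c x.\<close>
definition type_set :: "nat \<Rightarrow> vtx \<Rightarrow> vtx \<Rightarrow> etype \<Rightarrow> vtx set" where
  "type_set n x y t = {v. of_type n (\<lambda>_. v) x y t}"

lemma of_type_iff_type_set: "of_type n c x y t \<longleftrightarrow> c x \<in> type_set n x y t"
  by (cases t) (auto simp: of_type_def type_set_def)

definition type_prob :: "nat \<Rightarrow> vtx \<Rightarrow> vtx \<Rightarrow> etype \<Rightarrow> real" where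
  "type_prob n x y t = measure_pmf.prob (choice_pmf n x) (type_set n x y t)"

lemma type_prob_nonneg: "0 \<le> type_prob n x y t"
  by (simp add: type_prob_def)

lemma type_prob_S: "type_prob n x y S = (if adj n x y then 1 else 0)"
  by (simp add: type_prob_def type_set_def of_type_def)

lemma type_prob_W_le_pmf: "type_prob n x y W \<le> pmf (choice_pmf n x) y"
proof -
  have "type_set n x y W \<subseteq> {y}"
    by (auto simp: type_set_def of_type_def)
  then show ?thesis
    unfolding type_prob_def by (metis measure_pmf.finite_measure_mono measure_pmf_single sets_measure_pmf UNIV_I)
qed

lemma type_prob_W_le:
  "1 \<le> n \<Longrightarrow> x \<in> Vn n \<Longrightarrow> type_prob n x y W \<le> Zc_bound n"
  using type_prob_W_le_pmf pmf_choice_pmf_le order_trans by blast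

lemma sum_type_prob_le: "(\<Sum>y\<in>Vn n. type_prob n x y t) \<le> 27"
proof (cases t)
  case S
  have "(\<Sum>y\<in>Vn n. type_prob n x y S) = real (card {y \<in> Vn n. adj n x y})"
    by (simp add: type_prob_S sum.If_cases finite_Vn Int_def conj_commute)
  with S card_adj_le[of n x] show ?thesis
    by simp
next
  case W
  have "(\<Sum>y\<in>Vn n. type_prob n x y W) \<le> (\<Sum>y\<in>Vn n. pmf (choice_pmf n x) y)"
    by (intro sum_mono type_prob_W_le_pmf)
  also have "\<dots> = measure_pmf.prob (choice_pmf n x) (Vn n)"
    by (simp add: measure_measure_pmf_finite finite_Vn)
  also have "\<dots> \<le> 27"
    using measure_pmf.prob_le_1[of "choice_pmf n x" "Vn n"] by linarith
  finally show ?thesis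
    using W by simp
qed

lemma sum_type_prob_S_le: "(\<Sum>y\<in>Vn n. type_prob n y x S) \<le> 27"
  using sum_type_prob_le[of n x S] by (simp add: type_prob_S adj_commute)

lemma measure_Pi_pmf_three:
  assumes "finite A" "u \<in> A" "a \<in> A" "b \<in> A" "u \<noteq> a" "u \<noteq> b" "a \<noteq> b"
  shows "measure_pmf.prob (Pi_pmf A d p) {f. f u \<in> B1 \<and> f a \<in> B2 \<and> f b \<in> B3}
    = measure_pmf.prob (p u) B1 * measure_pmf.prob (p a) B2 * measure_pmf.prob (p b) B3"
proof -
  define B where "B x = (if x = u then B1 else if x = a then B2 else if x = b then B3 else UNIV)" for x
  have "{f. f u \<in> B1 \<and> f a \<in> B2 \<and> f b \<in> B3} = Pi A B"
  proof (intro set_eqI iffI)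
    fix f assume "f \<in> {f. f u \<in> B1 \<and> f a \<in> B2 \<and> f b \<in> B3}"
    then show "f \<in> Pi A B"
      by (simp add: Pi_def B_def)
  next
    fix f assume "f \<in> Pi A B"
    then have "f u \<in> B u" "f a \<in> B a" "f b \<in> B b"
      using assms(2-4) by (meson Pi_mem)+
    with assms(5-7) show "f \<in> {f. f u \<in> B1 \<and> f a \<in> B2 \<and> f b \<in> B3}"
      by (simp add: B_def)
  qed
  then have "measure_pmf.prob (Pi_pmf A d p) {f. f u \<in> B1 \<and> f a \<in> B2 \<and> f b \<in> B3}
      = (\<Prod>x\<in>A. measure_pmf.prob (p x) (B x))"
    by (simp add: measure_Pi_pmf_Pi[OF assms(1)])
  also have "\<dots> = (\<Prod>x\<in>{u, a, b}. measure_pmf.prob (p x) (B x))"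
    using assms by (intro prod.mono_neutral_right) (auto simp: B_def)
  also have "\<dots> = measure_pmf.prob (p u) B1 * measure_pmf.prob (p a) B2 * measure_pmf.prob (p b) B3"
    using assms(5-7) by (simp add: B_def mult.assoc)
  finally show ?thesis .
qed

lemma sum_sum_mult_le:
  fixes f :: "'a \<Rightarrow> real" and g :: "'a \<Rightarrow> 'b \<Rightarrow> real"
  assumes "\<And>a. a \<in> A \<Longrightarrow> 0 \<le> f a" "(\<Sum>a\<in>A. f a) \<le> F"
    and "\<And>a. a \<in> A \<Longrightarrow> (\<Sum>b\<in>B. g a b) \<le> G" "0 \<le> G"
  shows "(\<Sum>a\<in>A. \<Sum>b\<in>B. f a * g a b) \<le> F * G"
proof -
  have "(\<Sum>a\<in>A. \<Sum>b\<in>B. f a * g a b) = (\<Sum>a\<in>A. f a * (\<Sum>b\<in>B. g a b))"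
    by (simp add: sum_distrib_left)
  also have "\<dots> \<le> (\<Sum>a\<in>A. f a * G)"
    using assms by (intro sum_mono mult_left_mono) auto
  also have "\<dots> = (\<Sum>a\<in>A. f a) * G"
    by (simp add: sum_distrib_right)
  also have "\<dots> \<le> F * G"
    using assms by (intro mult_right_mono) auto
  finally show ?thesis .
qed

section \<open>Cycles of length three\<close>

definition C3_event :: "nat \<Rightarrow> vtx \<Rightarrow> etype \<Rightarrow> etype \<Rightarrow> etype \<Rightarrow> (vtx \<Rightarrow> vtx) set" where
  "C3_event n u t1 t2 t3 = {c. \<exists>a\<in>Vn n. \<exists>b\<in>Vn n. u \<noteq> a \<and> u \<noteq> b \<and> a \<noteq> b \<and>
     of_type n c u a t1 \<and> of_type n c a b t2 \<and> of_type n c b u t3}"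

lemma E_ev_eq_Union_C3_event:
  "E_ev n u = (\<Union>(t1, t2, t3)\<in>{(t1, t2, t3). W \<in> {t1, t2, t3}}. C3_event n u t1 t2 t3)"
proof (intro set_eqI iffI)
  fix c assume "c \<in> E_ev n u"
  then obtain t1 t2 t3 where "W \<in> {t1, t2, t3}" "c \<in> C3_event n u t1 t2 t3"
    unfolding E_ev_def C3_event_def by blast
  then show "c \<in> (\<Union>(t1, t2, t3)\<in>{(t1, t2, t3). W \<in> {t1, t2, t3}}. C3_event n u t1 t2 t3)"
    by (intro UN_I[of "(t1, t2, t3)"]) simp_all
next
  fix c assume "c \<in> (\<Union>(t1, t2, t3)\<in>{(t1, t2, t3). W \<in> {t1, t2, t3}}. C3_event n u t1 t2 t3)"
  then obtain t1 t2 t3 where "W \<in> {t1, t2, t3}" "c \<in> C3_event n u t1 t2 t3"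
    by auto
  then show "c \<in> E_ev n u"
    unfolding E_ev_def C3_event_def by blast
qed

lemma prob_C3_event_le:
  assumes "u \<in> Vn n"
  shows "measure_pmf.prob (OSW n) (C3_event n u t1 t2 t3)
    \<le> (\<Sum>a\<in>Vn n. \<Sum>b\<in>Vn n. type_prob n u a t1 * type_prob n a b t2 * type_prob n b u t3)"
proof -
  define D where "D = {(a, b) \<in> Vn n \<times> Vn n. u \<noteq> a \<and> u \<noteq> b \<and> a \<noteq> b}"
  define cyl where "cyl = (\<lambda>(a, b). {c. c u \<in> type_set n u a t1 \<and> c a \<in> type_set n a b t2 \<and>
    c b \<in> type_set n b u t3})"
  have "C3_event n u t1 t2 t3 = (\<Union>p\<in>D. cyl p)"
    by (auto simp: C3_event_def D_def cyl_def of_type_iff_type_set)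
  moreover have "finite D"
    by (rule finite_subset[of _ "Vn n \<times> Vn n"]) (auto simp: D_def finite_Vn)
  ultimately have "measure_pmf.prob (OSW n) (C3_event n u t1 t2 t3)
      \<le> (\<Sum>p\<in>D. measure_pmf.prob (OSW n) (cyl p))"
    by (simp add: measure_pmf.finite_measure_subadditive_finite)
  also have "\<dots> = (\<Sum>(a, b)\<in>D. type_prob n u a t1 * type_prob n a b t2 * type_prob n b u t3)"
  proof (rule sum.cong)
    fix p assume "p \<in> D"
    moreover obtain a b where p: "p = (a, b)" by (cases p)
    ultimately have "a \<in> Vn n" "b \<in> Vn n" "u \<noteq> a" "u \<noteq> b" "a \<noteq> b"
      by (auto simp: D_def)
    with assms show "measure_pmf.prob (OSW n) (cyl p)
        = (case p of (a, b) \<Rightarrow> type_prob n u a t1 * type_prob n a b t2 * type_prob n b u t3)"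
      by (simp add: p cyl_def OSW_def type_prob_def measure_Pi_pmf_three finite_Vn)
  qed simp
  also have "\<dots> \<le> (\<Sum>(a, b)\<in>Vn n \<times> Vn n. type_prob n u a t1 * type_prob n a b t2 * type_prob n b u t3)"
    by (intro sum_mono2) (auto simp: D_def finite_Vn type_prob_nonneg)
  also have "\<dots> = (\<Sum>a\<in>Vn n. \<Sum>b\<in>Vn n. type_prob n u a t1 * type_prob n a b t2 * type_prob n b u t3)"
    by (simp add: sum.cartesian_product)
  finally show ?thesis .
qed

text \<open>One long-range factor is bounded by Zc_bound, the other two are summed along the
  cycle. The long-range edge is chosen so that each remaining sum runs over the edges leaving a
  vertex or, for short-range edges, entering one.\<close>
lemma sum_C3_type_prob_le:
  assumes n: "1 \<le> n" and u: "u \<in> Vn n" and "W \<in> {t1, t2, t3}"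
  shows "(\<Sum>a\<in>Vn n. \<Sum>b\<in>Vn n. type_prob n u a t1 * type_prob n a b t2 * type_prob n b u t3)
    \<le> 729 * Zc_bound n"
proof -
  let ?q = "type_prob n" and ?Z = "Zc_bound n"
  have Z: "?q x y W \<le> ?Z" if "x \<in> Vn n" for x y
    using type_prob_W_le[OF n that] .
  note q0 = type_prob_nonneg
  consider "t3 = W" | "t2 = W" "t3 = S" | "t1 = W" "t2 = S" "t3 = S"
    using assms(3) by (cases t1; cases t2; cases t3) auto
  then show ?thesis
  proof cases
    case 1
    have "(\<Sum>a\<in>Vn n. \<Sum>b\<in>Vn n. ?q u a t1 * ?q a b t2 * ?q b u t3)
        \<le> (\<Sum>a\<in>Vn n. \<Sum>b\<in>Vn n. ?q u a t1 * ?q a b t2) * ?Z"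
      unfolding 1 sum_distrib_right using Z by (intro sum_mono mult_left_mono) (simp_all add: q0)
    also have "\<dots> \<le> (27 * 27) * ?Z"
      by (intro mult_right_mono sum_sum_mult_le sum_type_prob_le q0 Zc_bound_nonneg) simp
    finally show ?thesis by simp
  next
    case 2
    have "(\<Sum>a\<in>Vn n. \<Sum>b\<in>Vn n. ?q u a t1 * ?q a b t2 * ?q b u t3)
        \<le> (\<Sum>a\<in>Vn n. \<Sum>b\<in>Vn n. ?q u a t1 * ?q b u S) * ?Z"
      unfolding 2 sum_distrib_right
    proof (intro sum_mono)
      fix a b assume "a \<in> Vn n"
      then have "?q a b W * (?q u a t1 * ?q b u S) \<le> ?Z * (?q u a t1 * ?q b u S)"
        by (intro mult_right_mono Z mult_nonneg_nonneg q0)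
      then show "?q u a t1 * ?q a b W * ?q b u S \<le> ?q u a t1 * ?q b u S * ?Z"
        by (simp add: ac_simps)
    qed
    also have "\<dots> \<le> (27 * 27) * ?Z"
      by (intro mult_right_mono sum_sum_mult_le sum_type_prob_le sum_type_prob_S_le q0
          Zc_bound_nonneg) simp
    finally show ?thesis by simp
  next
    case 3
    have "(\<Sum>a\<in>Vn n. \<Sum>b\<in>Vn n. ?q u a t1 * ?q a b t2 * ?q b u t3)
        \<le> (\<Sum>a\<in>Vn n. \<Sum>b\<in>Vn n. ?q b u S * ?q a b S) * ?Z"
      unfolding 3 sum_distrib_right
    proof (intro sum_mono)
      fix a b
      have "?q u a W * (?q b u S * ?q a b S) \<le> ?Z * (?q b u S * ?q a b S)"
        by (intro mult_right_mono Z u mult_nonneg_nonneg q0)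
      then show "?q u a W * ?q a b S * ?q b u S \<le> ?q b u S * ?q a b S * ?Z"
        by (simp add: ac_simps)
    qed
    also have "\<dots> = (\<Sum>b\<in>Vn n. \<Sum>a\<in>Vn n. ?q b u S * ?q a b S) * ?Z"
      by (subst sum.swap) simp
    also have "\<dots> \<le> (27 * 27) * ?Z"
      by (intro mult_right_mono sum_sum_mult_le sum_type_prob_S_le q0 Zc_bound_nonneg) simp
    finally show ?thesis by simp
  qed
qed

lemma prob_E_ev_le:
  assumes "1 \<le> n" "u \<in> Vn n"
  shows "measure_pmf.prob (OSW n) (E_ev n u) \<le> 5832 * Zc_bound n"
proof -
  define T where "T = {(t1, t2, t3). W \<in> {t1, t2, t3}}"
  define C3 where "C3 = (\<lambda>(t1, t2, t3). C3_event n u t1 t2 t3)"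
  have "(UNIV :: etype set) = {S, W}"
    using etype.exhaust by auto
  then have T: "T \<subseteq> {S, W} \<times> {S, W} \<times> {S, W}"
    by (metis subset_UNIV UNIV_Times_UNIV)
  then have "finite T" "card T \<le> 8"
    using card_mono[OF _ T] by (auto intro: finite_subset simp: card_cartesian_product)
  have "E_ev n u = (\<Union>t\<in>T. C3 t)"
    by (simp add: E_ev_eq_Union_C3_event T_def C3_def)
  then have "measure_pmf.prob (OSW n) (E_ev n u) \<le> (\<Sum>t\<in>T. measure_pmf.prob (OSW n) (C3 t))"
    using \<open>finite T\<close> by (simp add: measure_pmf.finite_measure_subadditive_finite)
  also have "\<dots> \<le> (\<Sum>t\<in>T. 729 * Zc_bound n)"
  proof (rule sum_mono)
    fix t assume "t \<in> T"
    moreover obtain t1 t2 t3 where t: "t = (t1, t2, t3)" by (cases t)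
    ultimately have "W \<in> {t1, t2, t3}"
      by (simp add: T_def)
    with prob_C3_event_le[OF assms(2), of t1 t2 t3] sum_C3_type_prob_le[OF assms, of t1 t2 t3]
    show "measure_pmf.prob (OSW n) (C3 t) \<le> 729 * Zc_bound n"
      unfolding t C3_def by simp
  qed
  also have "\<dots> = real (card T) * (729 * Zc_bound n)"
    by simp
  also have "\<dots> \<le> 8 * (729 * Zc_bound n)"
    by (rule mult_right_mono) (use \<open>card T \<le> 8\<close> Zc_bound_nonneg in simp_all)
  finally show ?thesis by simp
qed

theorem theorem3:
  shows "\<exists>C N. \<forall>n\<ge>N. \<forall>u\<in>Vn n.
           measure_pmf.prob (OSW n) (E_ev n u) \<le> C / ln (real n)"
proof (intro exI allI impI ballI)
  fix n u assume n: "(9::nat) \<le> n" and u: "u \<in> Vn n"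
  have "measure_pmf.prob (OSW n) (E_ev n u) \<le> 5832 * Zc_bound n"
    using n u by (intro prob_E_ev_le) auto
  also have "\<dots> \<le> 5832 * (2 / ln (real n))"
    using Zc_bound_le[OF n] by simp
  finally show "measure_pmf.prob (OSW n) (E_ev n u) \<le> 11664 / ln (real n)"
    by simp
qed

end
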